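(* Let $X$ be a real vector space and let $A,B\subseteq X$ be two disjoint convex sets such that $A$ is vectorially closed and relatively solid. Suppose moreover that $B\subseteq Y$ for some finite-dimensional subspace $Y$ of $X$ and that $B$ is compact in $Y$ (with its usual Euclidean topology). Then $A$ and $B$ can be strongly separated by some $f\in X'$, i.e. there is $f\in X'$ with $\sup_{a\in A}f(a)<\inf_{b\in B}f(b)$.
   Context: $X'$ is the algebraic dual of $X$. For $C\subseteq X$: $vcl(C):=\{b\in X:\ \exists x\in X \text{ such that } \forall\lambda'>0\ \exists\lambda\in[0,\lambda'] \text{ with } b+\lambda x\in C\}$; $C$ is vectorially closed if $vcl(C)=C$; $C$ is relatively solid if $icr(C)\ne\emptyset$, where $icr(C):=\{x\in C:\ \forall x'\in span(C-C)\ \exists \lambda'>0 \text{ with } x+\lambda x'\in C\ \forall\lambda\in[0,\lambda']\}$. *)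

theory Defs
  imports "HOL-Analysis.Analysis"
begin

definition vcl :: "'a::real_vector set \<Rightarrow> 'a set" where
  "vcl C = {b. \<exists>x. \<forall>l'>0. \<exists>l\<in>{0..l'}. b + l *\<^sub>R x \<in> C}"

definition vectorially_closed :: "'a::real_vector set \<Rightarrow> bool" where
  "vectorially_closed C \<longleftrightarrow> vcl C = C"

definition icr :: "'a::real_vector set \<Rightarrow> 'a set" where
  "icr C = {x\<in>C. \<forall>x'\<in>span {c - d | c d. c \<in> C \<and> d \<in> C}.
              \<exists>l'>0. \<forall>l\<in>{0..l'}. x + l *\<^sub>R x' \<in> C}"

definition relatively_solid :: "'a::real_vector set \<Rightarrow> bool" where
  "relatively_solid C \<longleftrightarrow> icr C \<noteq> {}"

text \<open>A set B contained in a finite-dimensional subspace Y is compact in Y (with its usual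
  Euclidean topology) iff its image under some (equivalently: every) injective linear map of
  Y into a Euclidean space is compact.\<close>
definition compact_in_fd :: "'b::euclidean_space itself \<Rightarrow> 'a::real_vector set \<Rightarrow> 'a set \<Rightarrow> bool" where
  "compact_in_fd T Y B \<longleftrightarrow> (\<exists>g :: 'a \<Rightarrow> 'b. linear g \<and> inj_on g Y \<and> compact (g ` B))"

end

theory Submission
  imports Defs
begin

text \<open>Pick \<open>a0\<close> in the relative algebraic interior of \<open>A\<close> and let \<open>V = span (insert a0 Y)\<close>,
  which embeds linearly into a Euclidean space. In finite dimension the closure of a convex set is
  reached along segments ending at a relative interior point, so vectorial closedness makes the image
  of \<open>A \<inter> V\<close> closed, and a hyperplane strictly separates it from the compact image of \<open>B\<close>.
  The resulting functional \<open>h < c\<close> on \<open>A \<inter> V\<close> is then extended to the whole space by an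
  algebraic Hahn--Banach argument, dominated by \<open>c - h a0\<close> times the Minkowski gauge of
  \<open>A - a0\<close>; this gauge is finite on the span of \<open>A - A\<close> precisely because \<open>a0\<close> is a
  relative algebraic interior point.\<close>

section \<open>An algebraic Hahn--Banach theorem\<close>

text \<open>Partial linear functionals are handled through their graphs; the domain is \<open>fst ` G\<close>.\<close>

definition dominated_graph ::
    "'a::real_vector set \<Rightarrow> 'a set \<Rightarrow> ('a \<Rightarrow> real) \<Rightarrow> ('a \<Rightarrow> real) \<Rightarrow> ('a \<times> real) set \<Rightarrow> bool"
  where "dominated_graph V L p h G \<longleftrightarrow>
    (\<forall>x a b. (x, a) \<in> G \<longrightarrow> (x, b) \<in> G \<longrightarrow> a = b) \<and>
    (\<forall>x a y b. (x, a) \<in> G \<longrightarrow> (y, b) \<in> G \<longrightarrow> (x + y, a + b) \<in> G) \<and>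
    (\<forall>x a c. (x, a) \<in> G \<longrightarrow> (c *\<^sub>R x, c * a) \<in> G) \<and>
    (\<forall>x a. (x, a) \<in> G \<longrightarrow> x \<in> L \<longrightarrow> a \<le> p x) \<and>
    (\<forall>x\<in>V. (x, h x) \<in> G)"

lemma dominated_graphD:
  assumes "dominated_graph V L p h G"
  shows dominated_graph_functional: "(x, a) \<in> G \<Longrightarrow> (x, b) \<in> G \<Longrightarrow> a = b"
    and dominated_graph_add: "(x, a) \<in> G \<Longrightarrow> (y, b) \<in> G \<Longrightarrow> (x + y, a + b) \<in> G"
    and dominated_graph_scaleR: "(x, a) \<in> G \<Longrightarrow> (c *\<^sub>R x, c * a) \<in> G"
    and dominated_graph_le: "(x, a) \<in> G \<Longrightarrow> x \<in> L \<Longrightarrow> a \<le> p x"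
    and dominated_graph_base: "x \<in> V \<Longrightarrow> (x, h x) \<in> G"
  using assms unfolding dominated_graph_def by blast+

lemma dominated_graph_of_linear:
  assumes "subspace V" "linear h" "\<And>x. x \<in> V \<Longrightarrow> x \<in> L \<Longrightarrow> h x \<le> p x"
  shows "dominated_graph V L p h {(x, h x) | x. x \<in> V}"
  using assms by (auto simp: dominated_graph_def subspace_add subspace_scale linear_add linear_scale)

lemma dominated_graph_Union_chain:
  assumes "\<C> \<noteq> {}" and dom: "\<And>G. G \<in> \<C> \<Longrightarrow> dominated_graph V L p h G"
    and chain: "\<And>G1 G2. G1 \<in> \<C> \<Longrightarrow> G2 \<in> \<C> \<Longrightarrow> G1 \<subseteq> G2 \<or> G2 \<subseteq> G1"
  shows "dominated_graph V L p h (\<Union>\<C>)"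
proof -
  have common: "\<exists>G\<in>\<C>. u \<in> G \<and> v \<in> G" if "u \<in> \<Union>\<C>" "v \<in> \<Union>\<C>" for u v
    using that chain by blast
  obtain G0 where "G0 \<in> \<C>" using \<open>\<C> \<noteq> {}\<close> by blast
  show ?thesis
    unfolding dominated_graph_def
  proof (intro conjI allI impI ballI)
    fix x a b assume "(x, a) \<in> \<Union>\<C>" "(x, b) \<in> \<Union>\<C>"
    then show "a = b" using common dom dominated_graph_functional by metis
  next
    fix x a y b assume "(x, a) \<in> \<Union>\<C>" "(y, b) \<in> \<Union>\<C>"
    then show "(x + y, a + b) \<in> \<Union>\<C>" using common dom dominated_graph_add by (metis UnionI)
  next
    fix x a c assume "(x, a) \<in> \<Union>\<C>"
    then show "(c *\<^sub>R x, c * a) \<in> \<Union>\<C>" using dom dominated_graph_scaleR by blast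
  next
    fix x a assume "(x, a) \<in> \<Union>\<C>" "x \<in> L"
    then show "a \<le> p x" using dom dominated_graph_le by blast
  next
    fix x assume "x \<in> V"
    then show "(x, h x) \<in> \<Union>\<C>" using \<open>G0 \<in> \<C>\<close> dom dominated_graph_base by blast
  qed
qed

lemma dominated_graph_decomposition_unique:
  assumes G: "dominated_graph V L p h G" and z: "z \<notin> fst ` G"
    and "(s, a) \<in> G" "(s', a') \<in> G" and eq: "s + t *\<^sub>R z = s' + t' *\<^sub>R z"
  shows "t = t'" "s = s'" "a = a'"
proof -
  show "t = t'"
  proof (rule ccontr)
    assume "t \<noteq> t'"
    have "(s + (-1) *\<^sub>R s', a + (-1) * a') \<in> G"
      using assms by (meson dominated_graph_add dominated_graph_scaleR)
    then have "(inverse (t' - t) *\<^sub>R (s - s'), inverse (t' - t) * (a - a')) \<in> G"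
      using dominated_graph_scaleR[OF G] by fastforce
    moreover have "s - s' = (t' - t) *\<^sub>R z"
      using eq by (simp add: algebra_simps)
    ultimately have "(z, inverse (t' - t) * (a - a')) \<in> G"
      using \<open>t \<noteq> t'\<close> by simp
    with z show False by force
  qed
  then show "s = s'" using eq by simp
  then show "a = a'" using assms dominated_graph_functional by blast
qed

definition extend_graph :: "('a::real_vector \<times> real) set \<Rightarrow> 'a \<Rightarrow> real \<Rightarrow> ('a \<times> real) set"
  where "extend_graph G z c = {(s + t *\<^sub>R z, a + t * c) | s a t. (s, a) \<in> G}"

lemma extend_graphI: "(s, a) \<in> G \<Longrightarrow> (s + t *\<^sub>R z, a + t * c) \<in> extend_graph G z c"
  unfolding extend_graph_def by blast

lemma extend_graph_superset: "G \<subseteq> extend_graph G z c"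
  using extend_graphI[where t = 0] by force

lemma extend_graph_new_point: "(0, 0) \<in> G \<Longrightarrow> (z, c) \<in> extend_graph G z c"
  using extend_graphI[of 0 0 G 1 z c] by simp

lemma dominated_graph_extend_graph:
  assumes G: "dominated_graph V L p h G" and z: "z \<notin> fst ` G"
    and c: "\<And>s a t. (s, a) \<in> G \<Longrightarrow> s + t *\<^sub>R z \<in> L \<Longrightarrow> a + t * c \<le> p (s + t *\<^sub>R z)"
  shows "dominated_graph V L p h (extend_graph G z c)"
  unfolding dominated_graph_def
proof (intro conjI allI impI ballI)
  fix x a b assume "(x, a) \<in> extend_graph G z c" "(x, b) \<in> extend_graph G z c"
  then obtain s a1 t s' b1 t' where "(s, a1) \<in> G" "(s', b1) \<in> G" "x = s + t *\<^sub>R z" "x = s' + t' *\<^sub>R z"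
      "a = a1 + t * c" "b = b1 + t' * c"
    unfolding extend_graph_def by blast
  then show "a = b" using dominated_graph_decomposition_unique[OF G z] by metis
next
  fix x a y b assume "(x, a) \<in> extend_graph G z c" "(y, b) \<in> extend_graph G z c"
  then obtain s a1 t s' b1 t' where "(s, a1) \<in> G" "(s', b1) \<in> G" "x = s + t *\<^sub>R z" "y = s' + t' *\<^sub>R z"
      "a = a1 + t * c" "b = b1 + t' * c"
    unfolding extend_graph_def by blast
  moreover from this have "(s + s', a1 + b1) \<in> G" using dominated_graph_add[OF G] by blast
  ultimately show "(x + y, a + b) \<in> extend_graph G z c"
    using extend_graphI[of "s + s'" "a1 + b1" G "t + t'" z c] by (simp add: algebra_simps)
next
  fix x a r assume "(x, a) \<in> extend_graph G z c"
  then obtain s a1 t where "(s, a1) \<in> G" "x = s + t *\<^sub>R z" "a = a1 + t * c"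
    unfolding extend_graph_def by blast
  moreover from this have "(r *\<^sub>R s, r * a1) \<in> G" using dominated_graph_scaleR[OF G] by blast
  ultimately show "(r *\<^sub>R x, r * a) \<in> extend_graph G z c"
    using extend_graphI[of "r *\<^sub>R s" "r * a1" G "r * t" z c] by (simp add: algebra_simps)
next
  fix x a assume "(x, a) \<in> extend_graph G z c" "x \<in> L"
  then show "a \<le> p x" using c unfolding extend_graph_def by blast
next
  fix x assume "x \<in> V"
  then show "(x, h x) \<in> extend_graph G z c"
    using dominated_graph_base[OF G] extend_graph_superset by blast
qed

lemma dominated_graph_gap:
  assumes G: "dominated_graph V L p h G" and L: "subspace L" and z: "z \<in> L" and G0: "(0, 0) \<in> G"
    and sub: "\<And>x y. x \<in> L \<Longrightarrow> y \<in> L \<Longrightarrow> p (x + y) \<le> p x + p y"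
  obtains c where "\<And>s a. (s, a) \<in> G \<Longrightarrow> s \<in> L \<Longrightarrow> a - p (s - z) \<le> c"
    and "\<And>s a. (s, a) \<in> G \<Longrightarrow> s \<in> L \<Longrightarrow> c \<le> p (s + z) - a"
proof -
  let ?lower = "{a - p (s - z) | s a. (s, a) \<in> G \<and> s \<in> L}"
  have gap: "a' - p (s' - z) \<le> p (s + z) - a"
    if "(s, a) \<in> G" "s \<in> L" "(s', a') \<in> G" "s' \<in> L" for s a s' a'
  proof -
    have "a + a' \<le> p (s + s')"
      using that L dominated_graph_add[OF G] dominated_graph_le[OF G] by (meson subspace_add)
    also have "\<dots> = p ((s + z) + (s' - z))" by (simp add: algebra_simps)
    also have "\<dots> \<le> p (s + z) + p (s' - z)"
      using that z L by (intro sub) (simp_all add: subspace_add subspace_diff)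
    finally show ?thesis by simp
  qed
  have nonempty: "?lower \<noteq> {}" using G0 L by (auto simp: subspace_0)
  have bounded: "bdd_above ?lower"
    unfolding bdd_above_def using gap[OF G0 subspace_0[OF L]] by auto
  show ?thesis
  proof (rule that)
    show "a - p (s - z) \<le> Sup ?lower" if "(s, a) \<in> G" "s \<in> L" for s a
      using that by (intro cSup_upper[OF _ bounded]) blast
    show "Sup ?lower \<le> p (s + z) - a" if "(s, a) \<in> G" "s \<in> L" for s a
      using nonempty by (rule cSup_least) (use gap that in blast)
  qed
qed

lemma dominated_graph_extension_value:
  assumes G: "dominated_graph V L p h G" and L: "subspace L" and z: "z \<in> L" and G0: "(0, 0) \<in> G"
    and sub: "\<And>x y. x \<in> L \<Longrightarrow> y \<in> L \<Longrightarrow> p (x + y) \<le> p x + p y"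
    and hom: "\<And>x r. x \<in> L \<Longrightarrow> 0 < r \<Longrightarrow> p (r *\<^sub>R x) = r * p x"
  obtains c where "\<And>s a t. (s, a) \<in> G \<Longrightarrow> s + t *\<^sub>R z \<in> L \<Longrightarrow> a + t * c \<le> p (s + t *\<^sub>R z)"
proof -
  obtain c where lower: "\<And>s a. (s, a) \<in> G \<Longrightarrow> s \<in> L \<Longrightarrow> a - p (s - z) \<le> c"
    and upper: "\<And>s a. (s, a) \<in> G \<Longrightarrow> s \<in> L \<Longrightarrow> c \<le> p (s + z) - a"
    using dominated_graph_gap[OF G L z G0 sub] by blast
  have "a + t * c \<le> p (s + t *\<^sub>R z)" if sa: "(s, a) \<in> G" and stL: "s + t *\<^sub>R z \<in> L" for s a t
  proof -
    have sL: "s \<in> L"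
      using subspace_diff[OF L stL subspace_scale[OF L z, of t]] by simp
    have scaled: "(inverse r *\<^sub>R s, inverse r * a) \<in> G" "inverse r *\<^sub>R s \<in> L" for r
      using dominated_graph_scaleR[OF G sa] subspace_scale[OF L sL] by blast+
    consider "t > 0" | "t = 0" | "t < 0" by linarith
    then show ?thesis
    proof cases
      case 1
      have "t * c \<le> t * p (inverse t *\<^sub>R s + z) - a"
        using upper[OF scaled[of t]] 1 by (simp add: field_simps)
      also have "t * p (inverse t *\<^sub>R s + z) = p (s + t *\<^sub>R z)"
        using hom[OF subspace_add[OF L scaled(2)[of t] z], of t] 1 by (simp add: scaleR_add_right)
      finally show ?thesis by simp
    next
      case 2
      then show ?thesis using dominated_graph_le[OF G sa sL] by simp
    next
      case 3
      have "a - (- t) * p (inverse (- t) *\<^sub>R s - z) \<le> (- t) * c"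
        using lower[OF scaled[of "- t"]] 3 by (simp add: field_simps)
      also have "(- t) * p (inverse (- t) *\<^sub>R s - z) = p (s + t *\<^sub>R z)"
        using hom[OF subspace_diff[OF L scaled(2)[of "- t"] z], of "- t"] 3 by (simp add: scaleR_diff_right)
      finally show ?thesis by simp
    qed
  qed
  then show ?thesis using that by blast
qed

lemma dominated_graph_extension_value_outside:
  assumes G: "dominated_graph V L p h G" and LG: "L \<subseteq> fst ` G" and z: "z \<notin> fst ` G"
    and sa: "(s, a) \<in> G" and stL: "s + t *\<^sub>R z \<in> L"
  shows "a \<le> p (s + t *\<^sub>R z)"
proof -
  obtain b where "(s + t *\<^sub>R z, b) \<in> G" using stL LG by force
  then have "t = 0" using dominated_graph_decomposition_unique(1)[OF G z sa, of _ _ t 0] by simp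
  then show ?thesis using dominated_graph_le[OF G sa] stL by simp
qed

lemma exists_maximal_dominated_graph:
  assumes "subspace V" "linear h" "\<And>x. x \<in> V \<Longrightarrow> x \<in> L \<Longrightarrow> h x \<le> p x"
  obtains M where "dominated_graph V L p h M"
    "\<And>G. dominated_graph V L p h G \<Longrightarrow> M \<subseteq> G \<Longrightarrow> G = M"
proof -
  let ?\<G> = "{G. dominated_graph V L p h G}"
  have "\<exists>M\<in>?\<G>. \<forall>G\<in>?\<G>. M \<subseteq> G \<longrightarrow> G = M"
  proof (rule subset_Zorn_nonempty)
    show "?\<G> \<noteq> {}" using dominated_graph_of_linear[OF assms] by blast
    show "\<Union>\<C> \<in> ?\<G>" if "\<C> \<noteq> {}" "subset.chain ?\<G> \<C>" for \<C>
    proof -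
      have "\<And>G. G \<in> \<C> \<Longrightarrow> dominated_graph V L p h G"
        and "\<And>G1 G2. G1 \<in> \<C> \<Longrightarrow> G2 \<in> \<C> \<Longrightarrow> G1 \<subseteq> G2 \<or> G2 \<subseteq> G1"
        using that(2) unfolding subset.chain_def by auto
      then show ?thesis using dominated_graph_Union_chain[OF that(1)] by simp
    qed
  qed
  then show ?thesis using that by blast
qed

lemma total_dominated_graph:
  assumes V: "subspace V" and L: "subspace L" and h: "linear h"
    and hp: "\<And>x. x \<in> V \<Longrightarrow> x \<in> L \<Longrightarrow> h x \<le> p x"
    and sub: "\<And>x y. x \<in> L \<Longrightarrow> y \<in> L \<Longrightarrow> p (x + y) \<le> p x + p y"
    and hom: "\<And>x r. x \<in> L \<Longrightarrow> 0 < r \<Longrightarrow> p (r *\<^sub>R x) = r * p x"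
  obtains G where "dominated_graph V L p h G" "fst ` G = UNIV"
proof -
  obtain M where M: "dominated_graph V L p h M"
    and maximal: "\<And>G. dominated_graph V L p h G \<Longrightarrow> M \<subseteq> G \<Longrightarrow> G = M"
    using exists_maximal_dominated_graph[OF V h hp] by blast
  have M0: "(0, 0) \<in> M" using dominated_graph_base[OF M subspace_0[OF V]] h by (simp add: linear_0)
  have "x \<in> fst ` M" for x
  proof (rule ccontr)
    assume "x \<notin> fst ` M"
    \<comment> \<open>Inside \<open>L\<close> any new direction can be added; once \<open>L\<close> is covered, any direction can.\<close>
    obtain z c where z: "z \<notin> fst ` M"
      and c: "\<And>s a t. (s, a) \<in> M \<Longrightarrow> s + t *\<^sub>R z \<in> L \<Longrightarrow> a + t * c \<le> p (s + t *\<^sub>R z)"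
    proof (cases "L \<subseteq> fst ` M")
      case True
      show ?thesis
        using that[OF \<open>x \<notin> fst ` M\<close>, of 0]
          dominated_graph_extension_value_outside[OF M True \<open>x \<notin> fst ` M\<close>] by simp
    next
      case False
      then obtain z where "z \<in> L" "z \<notin> fst ` M" by blast
      obtain c where "\<And>s a t. (s, a) \<in> M \<Longrightarrow> s + t *\<^sub>R z \<in> L \<Longrightarrow> a + t * c \<le> p (s + t *\<^sub>R z)"
        using dominated_graph_extension_value[OF M L \<open>z \<in> L\<close> M0 sub hom] by metis
      with \<open>z \<notin> fst ` M\<close> show ?thesis by (rule that)
    qed
    have "extend_graph M z c = M"
      by (rule maximal[OF dominated_graph_extend_graph[OF M z c] extend_graph_superset])
    then have "(z, c) \<in> M" using extend_graph_new_point[OF M0, of z c] by simp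
    with z show False by (metis fst_conv image_eqI)
  qed
  then have "fst ` M = UNIV" by auto
  with M show ?thesis by (rule that)
qed

theorem hahn_banach_dominated_extension:
  fixes V L :: "'a::real_vector set" and h p :: "'a \<Rightarrow> real"
  assumes "subspace V" "subspace L" "linear h"
    and "\<And>x. x \<in> V \<Longrightarrow> x \<in> L \<Longrightarrow> h x \<le> p x"
    and "\<And>x y. x \<in> L \<Longrightarrow> y \<in> L \<Longrightarrow> p (x + y) \<le> p x + p y"
    and "\<And>x r. x \<in> L \<Longrightarrow> 0 < r \<Longrightarrow> p (r *\<^sub>R x) = r * p x"
  obtains F where "linear F" "\<And>x. x \<in> V \<Longrightarrow> F x = h x" "\<And>x. x \<in> L \<Longrightarrow> F x \<le> p x"
proof -
  obtain G where G: "dominated_graph V L p h G" and total: "fst ` G = UNIV"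
    using total_dominated_graph[OF assms] by blast
  define F where "F x = (THE y. (x, y) \<in> G)" for x
  have F_eq: "F x = y" if "(x, y) \<in> G" for x y
    unfolding F_def using that dominated_graph_functional[OF G] by blast
  have graph: "(x, F x) \<in> G" for x
  proof -
    obtain y where "(x, y) \<in> G" using total by (metis UNIV_I fst_eqD imageE prod.collapse)
    then show ?thesis using F_eq by simp
  qed
  have "linear F"
    unfolding linear_iff
    using F_eq dominated_graph_add[OF G graph graph] dominated_graph_scaleR[OF G graph] by simp
  then show ?thesis
    using that F_eq graph dominated_graph_base[OF G] dominated_graph_le[OF G] by blast
qed

section \<open>The Minkowski gauge\<close>

definition gauge_levels :: "'a::real_vector set \<Rightarrow> 'a \<Rightarrow> real set"
  where "gauge_levels C x = {t. 0 < t \<and> inverse t *\<^sub>R x \<in> C}"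

text \<open>\<open>Inf {}\<close> is unspecified for \<open>real\<close>, so the gauge is only used where its levels are nonempty.\<close>

definition minkowski_gauge :: "'a::real_vector set \<Rightarrow> 'a \<Rightarrow> real"
  where "minkowski_gauge C x = Inf (gauge_levels C x)"

lemma minkowski_gauge_le: "t \<in> gauge_levels C x \<Longrightarrow> minkowski_gauge C x \<le> t"
  unfolding minkowski_gauge_def
  by (rule cInf_lower) (auto simp: bdd_below_def gauge_levels_def intro: exI[of _ 0])

lemma minkowski_gauge_greatest:
  "gauge_levels C x \<noteq> {} \<Longrightarrow> (\<And>t. t \<in> gauge_levels C x \<Longrightarrow> u \<le> t) \<Longrightarrow> u \<le> minkowski_gauge C x"
  unfolding minkowski_gauge_def by (rule cInf_greatest)

lemma minkowski_gauge_le_one: "x \<in> C \<Longrightarrow> minkowski_gauge C x \<le> 1"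
  by (rule minkowski_gauge_le) (simp add: gauge_levels_def)

lemma gauge_levels_add:
  assumes C: "convex C" and s: "s \<in> gauge_levels C x" and t: "t \<in> gauge_levels C y"
  shows "s + t \<in> gauge_levels C (x + y)"
proof -
  have "0 < s" "0 < t" "inverse s *\<^sub>R x \<in> C" "inverse t *\<^sub>R y \<in> C"
    using s t by (auto simp: gauge_levels_def)
  then have "(s / (s + t)) *\<^sub>R (inverse s *\<^sub>R x) + (t / (s + t)) *\<^sub>R (inverse t *\<^sub>R y) \<in> C"
    by (intro convexD[OF C]) (simp_all add: add_divide_distrib[symmetric])
  also have "(s / (s + t)) *\<^sub>R (inverse s *\<^sub>R x) + (t / (s + t)) *\<^sub>R (inverse t *\<^sub>R y)
      = inverse (s + t) *\<^sub>R (x + y)"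
  proof -
    have "s / (s + t) * inverse s = inverse (s + t)" "t / (s + t) * inverse t = inverse (s + t)"
      using \<open>0 < s\<close> \<open>0 < t\<close> by (simp_all add: field_simps)
    then show ?thesis by (simp only: scaleR_scaleR scaleR_add_right)
  qed
  finally show ?thesis using \<open>0 < s\<close> \<open>0 < t\<close> by (simp add: gauge_levels_def)
qed

lemma minkowski_gauge_subadditive:
  assumes C: "convex C" and x: "gauge_levels C x \<noteq> {}" and y: "gauge_levels C y \<noteq> {}"
  shows "minkowski_gauge C (x + y) \<le> minkowski_gauge C x + minkowski_gauge C y"
proof -
  have "minkowski_gauge C (x + y) - t \<le> minkowski_gauge C x" if "t \<in> gauge_levels C y" for t
    using x by (rule minkowski_gauge_greatest)
      (use minkowski_gauge_le[OF gauge_levels_add[OF C _ that]] in force)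
  then have "minkowski_gauge C (x + y) - minkowski_gauge C x \<le> minkowski_gauge C y"
    using y by (intro minkowski_gauge_greatest) force+
  then show ?thesis by simp
qed

lemma gauge_levels_scaleR:
  assumes "0 < r"
  shows "r * t \<in> gauge_levels C (r *\<^sub>R x) \<longleftrightarrow> t \<in> gauge_levels C x"
proof -
  have rescale: "inverse (r * t) *\<^sub>R (r *\<^sub>R x) = inverse t *\<^sub>R x" using assms by simp
  show ?thesis
    unfolding gauge_levels_def mem_Collect_eq rescale using assms by (simp add: zero_less_mult_iff)
qed

lemma minkowski_gauge_scaleR:
  assumes r: "0 < r" and x: "gauge_levels C x \<noteq> {}"
  shows "minkowski_gauge C (r *\<^sub>R x) = r * minkowski_gauge C x"
proof (rule antisym)
  have "minkowski_gauge C (r *\<^sub>R x) / r \<le> minkowski_gauge C x"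
    using x
  proof (rule minkowski_gauge_greatest)
    fix t assume "t \<in> gauge_levels C x"
    then have "minkowski_gauge C (r *\<^sub>R x) \<le> r * t"
      using gauge_levels_scaleR[OF r] by (intro minkowski_gauge_le) blast
    then show "minkowski_gauge C (r *\<^sub>R x) / r \<le> t" using r by (simp add: field_simps)
  qed
  then show "minkowski_gauge C (r *\<^sub>R x) \<le> r * minkowski_gauge C x"
    using r by (simp add: field_simps)
  have "gauge_levels C (r *\<^sub>R x) \<noteq> {}" using x gauge_levels_scaleR[OF r] by blast
  then show "r * minkowski_gauge C x \<le> minkowski_gauge C (r *\<^sub>R x)"
  proof (rule minkowski_gauge_greatest)
    fix u assume "u \<in> gauge_levels C (r *\<^sub>R x)"
    moreover have "r * (u / r) = u" using r by simp
    ultimately have "u / r \<in> gauge_levels C x" using gauge_levels_scaleR[OF r, of "u / r" C x] by simp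
    then have "minkowski_gauge C x \<le> u / r" by (rule minkowski_gauge_le)
    then show "r * minkowski_gauge C x \<le> u" using r by (simp add: field_simps)
  qed
qed

lemma gauge_levels_translate:
  "t \<in> gauge_levels ((\<lambda>a. a - a0) ` A) x \<longleftrightarrow> 0 < t \<and> a0 + inverse t *\<^sub>R x \<in> A"
  unfolding gauge_levels_def by (force simp: algebra_simps)

lemma gauge_levels_nonempty_if_icr:
  assumes "a0 \<in> icr A" "x \<in> span {x - y | x y. x \<in> A \<and> y \<in> A}"
  shows "gauge_levels ((\<lambda>a. a - a0) ` A) x \<noteq> {}"
proof -
  have "\<exists>l>0. \<forall>l'\<in>{0..l}. a0 + l' *\<^sub>R x \<in> A"
    using assms unfolding icr_def by blast
  then obtain l where "0 < l" "a0 + l *\<^sub>R x \<in> A" by auto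
  then have "inverse l \<in> gauge_levels ((\<lambda>a. a - a0) ` A) x" by (simp add: gauge_levels_translate)
  then show ?thesis by blast
qed

lemma linear_le_minkowski_gauge:
  assumes h: "linear h" and V: "subspace V" "a0 \<in> V" "x \<in> V" and "a0 \<in> A"
    and bound: "\<And>a. a \<in> A \<Longrightarrow> a \<in> V \<Longrightarrow> h a < c"
    and levels: "gauge_levels ((\<lambda>a. a - a0) ` A) x \<noteq> {}"
  shows "h x \<le> (c - h a0) * minkowski_gauge ((\<lambda>a. a - a0) ` A) x"
proof -
  have "0 < c - h a0" using bound[OF \<open>a0 \<in> A\<close> V(2)] by simp
  have "h x / (c - h a0) \<le> minkowski_gauge ((\<lambda>a. a - a0) ` A) x"
    using levels
  proof (rule minkowski_gauge_greatest)
    fix t assume "t \<in> gauge_levels ((\<lambda>a. a - a0) ` A) x"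
    then have "0 < t" and inA: "a0 + inverse t *\<^sub>R x \<in> A" by (simp_all add: gauge_levels_translate)
    have "a0 + inverse t *\<^sub>R x \<in> V" using V by (simp add: subspace_add subspace_scale)
    with inA have "h (a0 + inverse t *\<^sub>R x) < c" by (rule bound)
    then have "h a0 + inverse t * h x < c" using h by (simp add: linear_add linear_scale)
    then show "h x / (c - h a0) \<le> t"
      using \<open>0 < t\<close> \<open>0 < c - h a0\<close> by (simp add: field_simps)
  qed
  then show ?thesis using \<open>0 < c - h a0\<close> by (simp add: field_simps)
qed

lemma linear_bound_extends_from_subspace:
  fixes A V :: "'a::real_vector set" and h :: "'a \<Rightarrow> real"
  assumes A: "convex A" and a0: "a0 \<in> icr A" and V: "subspace V" "a0 \<in> V" and h: "linear h"
    and bound: "\<And>a. a \<in> A \<Longrightarrow> a \<in> V \<Longrightarrow> h a < c"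
  obtains F where "linear F" "\<And>x. x \<in> V \<Longrightarrow> F x = h x" "\<And>a. a \<in> A \<Longrightarrow> F a \<le> c"
proof -
  define L where "L = span {x - y | x y. x \<in> A \<and> y \<in> A}"
  define C where "C = (\<lambda>a. a - a0) ` A"
  define p where "p x = (c - h a0) * minkowski_gauge C x" for x
  have "a0 \<in> A" using a0 by (simp add: icr_def)
  have "0 < c - h a0" using bound[OF \<open>a0 \<in> A\<close> V(2)] by simp
  have levels: "gauge_levels C x \<noteq> {}" if "x \<in> L" for x
    using gauge_levels_nonempty_if_icr[OF a0] that unfolding C_def L_def .
  have dominated: "h x \<le> p x" if "x \<in> V" "x \<in> L" for x
    using linear_le_minkowski_gauge[OF h V that(1) \<open>a0 \<in> A\<close> bound] levels[OF that(2)]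
    unfolding p_def C_def by blast
  have subadditive: "p (x + y) \<le> p x + p y" if "x \<in> L" "y \<in> L" for x y
    using minkowski_gauge_subadditive[OF _ levels levels, OF _ that] A \<open>0 < c - h a0\<close>
    by (simp add: p_def C_def flip: distrib_left)
  have homogeneous: "p (r *\<^sub>R x) = r * p x" if "x \<in> L" "0 < r" for x r
    using minkowski_gauge_scaleR[OF that(2) levels[OF that(1)]] by (simp add: p_def)
  have "subspace L" unfolding L_def by (rule subspace_span)
  obtain F where F: "linear F" "\<And>x. x \<in> V \<Longrightarrow> F x = h x" "\<And>x. x \<in> L \<Longrightarrow> F x \<le> p x"
    using hahn_banach_dominated_extension[OF V(1) \<open>subspace L\<close> h dominated subadditive homogeneous]
    by blast
  have "F a \<le> c" if "a \<in> A" for a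
  proof -
    have "a - a0 \<in> L" unfolding L_def using that \<open>a0 \<in> A\<close> by (intro span_base) blast
    have "F a = h a0 + F (a - a0)" using F(1,2) V(2) by (simp add: linear_diff)
    also have "F (a - a0) \<le> (c - h a0) * minkowski_gauge C (a - a0)"
      using F(3)[OF \<open>a - a0 \<in> L\<close>] by (simp add: p_def)
    also have "\<dots> \<le> c - h a0"
      using minkowski_gauge_le_one[of "a - a0" C] that \<open>0 < c - h a0\<close> by (force simp: C_def)
    finally show ?thesis by simp
  qed
  with F(1,2) show ?thesis by (rule that)
qed

section \<open>Strict separation in finite dimension\<close>

lemma in_vcl_if_segment:
  assumes "\<And>e. 0 < e \<Longrightarrow> e \<le> 1 \<Longrightarrow> v + e *\<^sub>R (w - v) \<in> A"
  shows "v \<in> vcl A"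
  unfolding vcl_def
proof (intro CollectI exI allI impI)
  fix l :: real assume "0 < l"
  then show "\<exists>e\<in>{0..l}. v + e *\<^sub>R (w - v) \<in> A"
    using assms[of "min l 1"] by (intro bexI[of _ "min l 1"]) auto
qed

lemma closed_image_vectorially_closed:
  fixes H :: "'a::real_vector \<Rightarrow> 'c::euclidean_space"
  assumes H: "linear H" "inj_on H V" and V: "subspace V"
    and A: "convex A" "vectorially_closed A"
  shows "closed (H ` (A \<inter> V))"
proof (cases "A \<inter> V = {}")
  case False
  define S where "S = H ` (A \<inter> V)"
  have "convex S"
    unfolding S_def using A(1) subspace_imp_convex[OF V] H(1) by (intro convex_linear_image convex_Int)
  obtain c where c: "c \<in> rel_interior S"
    using rel_interior_eq_empty[OF \<open>convex S\<close>] False by (auto simp: S_def)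
  then obtain w where w: "w \<in> A" "w \<in> V" "c = H w"
    using rel_interior_subset unfolding S_def by blast
  have "closure S \<subseteq> H ` V"
    by (rule closure_minimal) (auto simp: S_def intro: closed_subspace linear_subspace_image V H(1))
  have "x \<in> S" if x: "x \<in> closure S" for x
  proof -
    obtain v where v: "v \<in> V" "x = H v" using x \<open>closure S \<subseteq> H ` V\<close> by blast
    \<comment> \<open>Shrinking \<open>x\<close> towards \<open>c\<close> lands in \<open>S\<close>; by injectivity this is the segment from \<open>v\<close> to \<open>w\<close>.\<close>
    have "v + e *\<^sub>R (w - v) \<in> A" if e: "0 < e" "e \<le> 1" for e
    proof -
      have "x - e *\<^sub>R (x - c) \<in> S"
        using rel_interior_closure_convex_shrink[OF \<open>convex S\<close> c x e] rel_interior_subset by blast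
      then obtain a where a: "a \<in> A" "a \<in> V" "H a = x - e *\<^sub>R (x - c)"
        unfolding S_def by auto
      have "H a = H (v + e *\<^sub>R (w - v))"
        using a(3) v(2) w(3) H(1) by (simp add: linear_add linear_diff linear_scale scaleR_diff_right)
      moreover have "v + e *\<^sub>R (w - v) \<in> V"
        using V v(1) w(2) by (simp add: subspace_add subspace_diff subspace_scale)
      ultimately have "a = v + e *\<^sub>R (w - v)" using inj_onD[OF H(2)] a(2) by blast
      with a(1) show ?thesis by simp
    qed
    then have "v \<in> A" using in_vcl_if_segment A(2) unfolding vectorially_closed_def by blast
    with v show ?thesis unfolding S_def by blast
  qed
  then show ?thesis using closure_subset_eq unfolding S_def by blast
qed simp

lemma strict_separation_in_embedded_subspace:
  fixes H :: "'a::real_vector \<Rightarrow> 'c::euclidean_space"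
  assumes A: "convex A" "vectorially_closed A" and B: "convex B" "B \<noteq> {}" "B \<subseteq> V"
    and disjoint: "A \<inter> B = {}" and V: "subspace V"
    and H: "linear H" "inj_on H V" and compact: "compact (H ` B)"
  obtains h :: "'a \<Rightarrow> real" and c d
  where "linear h" "\<And>a. a \<in> A \<Longrightarrow> a \<in> V \<Longrightarrow> h a < c" "c < d" "\<And>b. b \<in> B \<Longrightarrow> d \<le> h b"
proof -
  have "convex (H ` (A \<inter> V))"
    using A(1) subspace_imp_convex[OF V] H(1) by (intro convex_linear_image convex_Int)
  moreover have "H ` (A \<inter> V) \<inter> H ` B = {}"
    using disjoint B(3) inj_onD[OF H(2)] by blast
  moreover have "H ` B \<noteq> {}" using B(2) by simp
  ultimately obtain w c
    where sep: "\<forall>x\<in>H ` (A \<inter> V). inner w x < c" "\<forall>x\<in>H ` B. c < inner w x"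
    using separating_hyperplane_closed_compact[OF _ closed_image_vectorially_closed[OF H V A]
        convex_linear_image[OF H(1) B(1)] compact]
    by meson
  have "continuous_on (H ` B) (\<lambda>x. inner w x)" by (intro continuous_intros)
  from continuous_attains_inf[OF compact \<open>H ` B \<noteq> {}\<close> this]
  obtain y where "y \<in> H ` B" "\<forall>y'\<in>H ` B. inner w y \<le> inner w y'"
    by (elim bexE)
  define d where "d = inner w y"
  show ?thesis
  proof (rule that)
    show "linear (\<lambda>v. inner w (H v))"
      using linear_compose[OF H(1) bounded_linear.linear[OF bounded_linear_inner_right]] by (simp add: o_def)
    show "inner w (H a) < c" if "a \<in> A" "a \<in> V" for a using that sep(1) by blast
    show "c < d" unfolding d_def using sep(2) \<open>y \<in> H ` B\<close> by blast
    show "d \<le> inner w (H b)" if "b \<in> B" for b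
      unfolding d_def using that \<open>\<forall>y'\<in>H ` B. inner w y \<le> inner w y'\<close> by blast
  qed
qed

lemma linear_functional_vanishing_on_subspace:
  fixes Y :: "'a::real_vector set"
  assumes Y: "subspace Y" and a0: "a0 \<notin> Y"
  obtains \<phi> :: "'a \<Rightarrow> real" where "linear \<phi>" "\<And>y. y \<in> Y \<Longrightarrow> \<phi> y = 0" "\<phi> a0 = 1"
proof -
  obtain S where S: "S \<subseteq> Y" "independent S" "Y \<subseteq> span S" by (rule basis_exists[of Y])
  have "span S = Y" by (rule span_subspace[OF S(1) S(3) Y])
  then have "independent (insert a0 S)" using S(2) a0 by (simp add: independent_insertI)
  then obtain \<phi> :: "'a \<Rightarrow> real"
    where \<phi>: "linear \<phi>" "\<forall>x\<in>insert a0 S. \<phi> x = (if x = a0 then 1 else 0)"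
    using linear_independent_extend[of "insert a0 S" "\<lambda>x. if x = a0 then 1 else 0"] by blast
  have "\<forall>x\<in>S. \<phi> x = 0" using \<phi>(2) S(1) a0 by auto
  then have "\<phi> y = 0" if "y \<in> Y" for y
    using linear_eq_0_on_span[OF \<phi>(1)] that \<open>span S = Y\<close> by blast
  moreover have "\<phi> a0 = 1" using \<phi>(2) by simp
  ultimately show ?thesis by (rule that[OF \<phi>(1)])
qed

lemma embedding_of_span_insert:
  fixes g :: "'a::real_vector \<Rightarrow> 'b::real_vector"
  assumes Y: "subspace Y" and g: "linear g" "inj_on g Y"
  obtains G :: "'a \<Rightarrow> 'b \<times> real"
  where "linear G" "inj_on G (span (insert z Y))" "\<And>y. y \<in> Y \<Longrightarrow> G y = (g y, 0)"
proof -
  obtain \<phi> :: "'a \<Rightarrow> real"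
    where \<phi>: "linear \<phi>" "\<And>y. y \<in> Y \<Longrightarrow> \<phi> y = 0" "z \<notin> Y \<Longrightarrow> \<phi> z = 1"
  proof (cases "z \<in> Y")
    case True
    show ?thesis by (rule that[of "\<lambda>_. 0"]) (simp_all add: True linear_zero)
  next
    case False
    then show ?thesis using linear_functional_vanishing_on_subspace[OF Y False] that by blast
  qed
  define G where "G v = (g v, \<phi> v)" for v
  have "linear G" unfolding linear_iff G_def using g(1) \<phi>(1) by (simp add: linear_add linear_scale)
  have "span Y = Y" using Y by simp
  have "v = 0" if v: "v \<in> span (insert z Y)" "G v = 0" for v
  proof -
    obtain k where k: "v - k *\<^sub>R z \<in> Y"
      using v(1) unfolding span_breakdown_eq \<open>span Y = Y\<close> by blast
    have "g v = 0" "\<phi> v = 0" using v(2) by (simp_all add: G_def zero_prod_def)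
    have "\<phi> v = \<phi> (v - k *\<^sub>R z) + k * \<phi> z" using \<phi>(1) by (simp add: linear_diff linear_scale)
    then have "k = 0 \<or> z \<in> Y" using \<phi>(2)[OF k] \<phi>(3) \<open>\<phi> v = 0\<close> by auto
    then have "v \<in> Y" using k Y by (metis diff_add_cancel scale_eq_0_iff subspace_add subspace_scale diff_zero)
    then show "v = 0"
      using inj_onD[OF g(2), of v 0] \<open>g v = 0\<close> linear_0[OF g(1)] subspace_0[OF Y] by simp
  qed
  then have "inj_on G (span (insert z Y))"
    using linear_inj_on_iff_eq_0[OF \<open>linear G\<close> subspace_span] by blast
  moreover have "G y = (g y, 0)" if "y \<in> Y" for y using \<phi>(2)[OF that] by (simp add: G_def)
  ultimately show ?thesis using \<open>linear G\<close> that by blast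
qed

lemma strict_separation_in_span_insert:
  fixes A B Y :: "'a::real_vector set"
  assumes A: "convex A" "vectorially_closed A" and B: "convex B" "B \<noteq> {}" "B \<subseteq> Y"
    and disjoint: "A \<inter> B = {}" and Y: "subspace Y"
    and compact: "compact_in_fd TYPE('b::euclidean_space) Y B"
  obtains h :: "'a \<Rightarrow> real" and c d
  where "linear h" "\<And>a. a \<in> A \<Longrightarrow> a \<in> span (insert z Y) \<Longrightarrow> h a < c" "c < d"
    "\<And>b. b \<in> B \<Longrightarrow> d \<le> h b"
proof -
  obtain g :: "'a \<Rightarrow> 'b" where g: "linear g" "inj_on g Y" "compact (g ` B)"
    using compact unfolding compact_in_fd_def by blast
  obtain G :: "'a \<Rightarrow> 'b \<times> real"
    where G: "linear G" "inj_on G (span (insert z Y))" "\<And>y. y \<in> Y \<Longrightarrow> G y = (g y, 0)"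
    using embedding_of_span_insert[OF Y g(1,2)] by blast
  have "G ` B = (\<lambda>u. (u, 0)) ` g ` B" using B(3) G(3) by (force simp: image_image)
  then have "compact (G ` B)"
    using g(3) by (auto intro!: compact_continuous_image continuous_intros)
  moreover have "B \<subseteq> span (insert z Y)" using B(3) span_superset by blast
  ultimately show ?thesis
    using strict_separation_in_embedded_subspace[OF A B(1,2) _ disjoint subspace_span G(1,2)] that by blast
qed

lemma SUP_less_INF_if_gap:
  fixes f :: "'a \<Rightarrow> real"
  assumes "\<And>a. a \<in> A \<Longrightarrow> f a \<le> c" "c < d" "\<And>b. b \<in> B \<Longrightarrow> d \<le> f b"
  shows "(SUP a\<in>A. ereal (f a)) < (INF b\<in>B. ereal (f b))"
proof -
  have "(SUP a\<in>A. ereal (f a)) \<le> ereal c" using assms(1) by (intro SUP_least) simp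
  also have "ereal c < ereal d" using assms(2) by simp
  also have "ereal d \<le> (INF b\<in>B. ereal (f b))" using assms(3) by (intro INF_greatest) simp
  finally show ?thesis .
qed

theorem theorem4p3:
  fixes A B Y :: "'a::real_vector set"
  assumes "convex A" and "convex B" and "A \<inter> B = {}"
    and "vectorially_closed A" and "relatively_solid A"
    and "subspace Y" and "\<exists>S. finite S \<and> Y = span S"
    and "B \<subseteq> Y"
    and "compact_in_fd TYPE('b::euclidean_space) Y B"
  shows "\<exists>f :: 'a \<Rightarrow> real. linear f \<and>
           (SUP a\<in>A. ereal (f a)) < (INF b\<in>B. ereal (f b))"
proof -
  obtain a0 where a0: "a0 \<in> icr A" using assms(5) unfolding relatively_solid_def by blast
  obtain f :: "'a \<Rightarrow> real" and c d
    where "linear f" "\<And>a. a \<in> A \<Longrightarrow> f a \<le> c" "c < d" "\<And>b. b \<in> B \<Longrightarrow> d \<le> f b"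
  proof (cases "B = {}")
    case True
    show ?thesis by (rule that[of "\<lambda>_. 0" 0 1]) (simp_all add: True linear_zero)
  next
    case False
    obtain h :: "'a \<Rightarrow> real" and c d
      where h: "linear h" "\<And>a. a \<in> A \<Longrightarrow> a \<in> span (insert a0 Y) \<Longrightarrow> h a < c"
        "c < d" "\<And>b. b \<in> B \<Longrightarrow> d \<le> h b"
      using strict_separation_in_span_insert[where z = a0, OF assms(1,4,2) False assms(8,3,6,9)] by blast
    obtain F where F: "linear F" "\<And>x. x \<in> span (insert a0 Y) \<Longrightarrow> F x = h x"
        "\<And>a. a \<in> A \<Longrightarrow> F a \<le> c"
      using linear_bound_extends_from_subspace[OF assms(1) a0 subspace_span span_base[OF insertI1] h(1,2)]
      by blast
    have "F b = h b" if "b \<in> B" for b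
      using that assms(8) by (intro F(2)) (auto intro: span_base)
    with F(1,3) h(3,4) show ?thesis using that by metis
  qed
  then show ?thesis using SUP_less_INF_if_gap by blast
qed

end
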